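(* Consider the two-player game (defined in the context) in which each player, after learning its valuation, chooses a latency $t>0$ and a bid $m\ge0$, and let $b(g)=\int_0^1 m(v)\,dv$ be the expected equilibrium bid of a player in the symmetric equilibrium with strictly increasing score in which a zero-valuation type invests nothing. Then $\lim_{g\to\infty}b(g)=\frac16$, and $b(g)$ is an increasing function of $g$ for all sufficiently large $g$.
   Context: Fix $g>0$. Two players have valuations $v_1,v_2$ drawn independently and uniformly from $[0,1]$. After observing its valuation, a player chooses a bid $m\ge0$ and a latency $t>0$ (the time after the arbitrage opportunity at which its transaction reaches the sequencer), at total cost $m+\frac1t$. Its score is $s=\frac{gm}{m+1}-t$. The player with the higher score has its transaction ordered first and receives its valuation; costs are paid regardless, so the payoff is $v_i\cdot\mathbf{1}[\text{higher score}]-m-\frac1t$. In equilibrium each type $v$ chooses a cost-minimizing pair $(m(v),t(v))$ producing its equilibrium score $s(v)$. *)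

theory Defs
  imports "HOL-Analysis.Analysis"
begin

definition score :: "real \<Rightarrow> real \<Rightarrow> real \<Rightarrow> real" where
  "score g m t = g * m / (m + 1) - t"

definition cost :: "real \<Rightarrow> real \<Rightarrow> real" where
  "cost m t = m + 1 / t"

text \<open>Probability that a player choosing score s beats the opponent, whose valuation
  is uniform on [0,1] and who plays the strategy sigma (the single type v = 0,
  a null set, is excluded: it has no optimal action since t > 0).\<close>
definition win_prob :: "real \<Rightarrow> (real \<Rightarrow> real \<times> real) \<Rightarrow> real \<Rightarrow> real" where
  "win_prob g \<sigma> s = measure lborel {w \<in> {0<..1}. score g (fst (\<sigma> w)) (snd (\<sigma> w)) < s}"

definition payoff :: "real \<Rightarrow> (real \<Rightarrow> real \<times> real) \<Rightarrow> real \<Rightarrow> real \<Rightarrow> real \<Rightarrow> real" where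
  "payoff g \<sigma> v m t = v * win_prob g \<sigma> (score g m t) - cost m t"

text \<open>Symmetric equilibrium with strictly increasing score, cost-minimizing
  choices, and the zero-valuation type investing nothing (cost tends to 0 as v tends to 0).\<close>
definition sym_equilibrium :: "real \<Rightarrow> (real \<Rightarrow> real \<times> real) \<Rightarrow> bool" where
  "sym_equilibrium g \<sigma> \<longleftrightarrow>
     (\<forall>v\<in>{0<..1}. fst (\<sigma> v) \<ge> 0 \<and> snd (\<sigma> v) > 0)
   \<and> strict_mono_on {0<..1} (\<lambda>v. score g (fst (\<sigma> v)) (snd (\<sigma> v)))
   \<and> (\<forall>v\<in>{0<..1}. \<forall>m t. m \<ge> 0 \<longrightarrow> t > 0 \<longrightarrow>
        payoff g \<sigma> v m t \<le> payoff g \<sigma> v (fst (\<sigma> v)) (snd (\<sigma> v)))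
   \<and> (\<forall>v\<in>{0<..1}. \<forall>m t. m \<ge> 0 \<longrightarrow> t > 0 \<longrightarrow>
        score g m t \<ge> score g (fst (\<sigma> v)) (snd (\<sigma> v)) \<longrightarrow>
        cost (fst (\<sigma> v)) (snd (\<sigma> v)) \<le> cost m t)
   \<and> ((\<lambda>v. cost (fst (\<sigma> v)) (snd (\<sigma> v))) \<longlongrightarrow> 0) (at_right 0)"

definition exp_bid :: "(real \<Rightarrow> real \<times> real) \<Rightarrow> real" where
  "exp_bid \<sigma> = integral {0..1} (\<lambda>v. fst (\<sigma> v))"

end

theory Submission
  imports Defs "HOL-Real_Asymp.Real_Asymp"
begin

text \<open>With a strictly increasing equilibrium score, type \<open>u\<close> wins with probability \<open>u\<close>, so
  incentive compatibility pins the equilibrium cost down up to a constant, and the condition at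
  \<open>v = 0\<close> makes it \<open>v\<^sup>2/2\<close> (revenue equivalence with the all-pay auction). Each type spends this
  budget so as to maximise its score, which for \<open>a = sqrt g\<close> gives the bid
  \<open>max 0 ((a v\<^sup>2/2 - 1)/(a + 1))\<close>. Writing \<open>u = sqrt (2/a)\<close> for the valuation below which
  nobody bids, the expected bid is \<open>(1 - 3u\<^sup>2 + 2u\<^sup>3)/(6 + 3u\<^sup>2)\<close>; it decreases in \<open>u \<in> [0,1]\<close>
  and tends to \<open>1/6\<close> as \<open>u \<rightarrow> 0\<close>, i.e. as \<open>g \<rightarrow> \<infinity>\<close>.\<close>

lemma win_prob_equilibrium_score:
  assumes eq: "sym_equilibrium g \<sigma>" and u: "u \<in> {0<..1}"
  shows "win_prob g \<sigma> (score g (fst (\<sigma> u)) (snd (\<sigma> u))) = u"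
proof -
  let ?s = "\<lambda>v. score g (fst (\<sigma> v)) (snd (\<sigma> v))"
  have mono: "strict_mono_on {0<..1} ?s" using eq unfolding sym_equilibrium_def by blast
  have "{w \<in> {0<..1}. ?s w < ?s u} = {0<..<u}"
  proof (intro set_eqI iffI)
    fix w assume w: "w \<in> {w \<in> {0<..1}. ?s w < ?s u}"
    then have "\<not> u \<le> w" using strict_mono_on_leD[OF mono u, of w] by force
    with w show "w \<in> {0<..<u}" by auto
  next
    fix w assume "w \<in> {0<..<u}"
    with mono u show "w \<in> {w \<in> {0<..1}. ?s w < ?s u}" by (auto intro: strict_mono_onD)
  qed
  then show ?thesis unfolding win_prob_def using u by simp
qed

lemma equilibrium_incentive_compatible:
  assumes eq: "sym_equilibrium g \<sigma>" and u: "u \<in> {0<..1}" and v: "v \<in> {0<..1}"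
  shows "v * u - cost (fst (\<sigma> u)) (snd (\<sigma> u)) \<le> v * v - cost (fst (\<sigma> v)) (snd (\<sigma> v))"
proof -
  have "payoff g \<sigma> v (fst (\<sigma> u)) (snd (\<sigma> u)) \<le> payoff g \<sigma> v (fst (\<sigma> v)) (snd (\<sigma> v))"
    using eq u v unfolding sym_equilibrium_def by blast
  then show ?thesis
    unfolding payoff_def win_prob_equilibrium_score[OF eq u] win_prob_equilibrium_score[OF eq v] .
qed

lemma abs_diff_le_square_imp_eq:
  fixes d :: "real \<Rightarrow> real"
  assumes bound: "\<And>x y. x \<in> S \<Longrightarrow> y \<in> S \<Longrightarrow> \<bar>d x - d y\<bar> \<le> C * (x - y)^2"
    and midpoint: "\<And>x y. x \<in> S \<Longrightarrow> y \<in> S \<Longrightarrow> (x + y) / 2 \<in> S"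
    and x: "x \<in> S" and y: "y \<in> S"
  shows "d x = d y"
proof -
  have halving: "\<forall>x\<in>S. \<forall>y\<in>S. \<bar>d x - d y\<bar> \<le> C * (x - y)^2 / 2^k" for k
  proof (induction k)
    case 0
    then show ?case using bound by simp
  next
    case (Suc k)
    show ?case
    proof (intro ballI)
      fix x y assume x: "x \<in> S" and y: "y \<in> S"
      let ?m = "(x + y) / 2"
      have "\<bar>d x - d y\<bar> \<le> \<bar>d x - d ?m\<bar> + \<bar>d ?m - d y\<bar>" by linarith
      also have "\<dots> \<le> C * (x - ?m)^2 / 2^k + C * (?m - y)^2 / 2^k"
        using Suc x y midpoint[OF x y] by (meson add_mono)
      also have "\<dots> = C * (x - y)^2 / 2^Suc k"
        by (simp add: power2_eq_square field_simps)
      finally show "\<bar>d x - d y\<bar> \<le> C * (x - y)^2 / 2^Suc k" .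
    qed
  qed
  show ?thesis
  proof (rule ccontr)
    let ?e = "\<bar>d x - d y\<bar>"
    assume "d x \<noteq> d y"
    then have e: "?e > 0" by simp
    obtain k where k: "\<bar>C\<bar> * (x - y)^2 / ?e < 2^k"
      using real_arch_pow[of 2 "\<bar>C\<bar> * (x - y)^2 / ?e"] by auto
    have "?e \<le> C * (x - y)^2 / 2^k" using halving x y by blast
    also have "\<dots> \<le> \<bar>C\<bar> * (x - y)^2 / 2^k"
      by (intro divide_right_mono mult_right_mono) auto
    also have "\<dots> < ?e" using k e by (simp add: field_simps)
    finally show False by simp
  qed
qed

lemma equilibrium_cost:
  assumes eq: "sym_equilibrium g \<sigma>" and v: "v \<in> {0<..1}"
  shows "cost (fst (\<sigma> v)) (snd (\<sigma> v)) = v^2 / 2"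
proof -
  define c where "c w = cost (fst (\<sigma> w)) (snd (\<sigma> w))" for w
  define d where "d w = c w - w^2 / 2" for w
  have "\<bar>d x - d y\<bar> \<le> 1/2 * (x - y)^2" if "x \<in> {0<..1}" "y \<in> {0<..1}" for x y
    using equilibrium_incentive_compatible[OF eq that] equilibrium_incentive_compatible[OF eq that(2,1)]
    unfolding d_def c_def by (auto simp: abs_le_iff power2_eq_square algebra_simps)
  then have const: "d x = d 1" if "x \<in> {0<..1}" for x
    by (rule abs_diff_le_square_imp_eq[OF _ _ that]) auto
  have "(c \<longlongrightarrow> 0) (at_right 0)" using eq unfolding sym_equilibrium_def c_def by blast
  then have "(d \<longlongrightarrow> 0 - 0^2/2) (at_right 0)" unfolding d_def by (intro tendsto_intros) auto
  moreover have "eventually (\<lambda>w. d w = d 1) (at_right (0::real))"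
    unfolding eventually_at_right_field by (auto intro!: exI[of _ 1] const)
  then have "(d \<longlongrightarrow> d 1) (at_right 0)" by (rule tendsto_eventually)
  ultimately have "0 - 0^2/2 = d 1" by (rule tendsto_unique[OF trivial_limit_at_right_real])
  then show ?thesis using const[OF v] unfolding d_def c_def by simp
qed

text \<open>The score of bid \<open>x\<close> when the total cost is \<open>c\<close>, i.e. at latency \<open>1/(c - x)\<close>,
  and \<open>g = a\<^sup>2\<close>.\<close>
definition budget_score :: "real \<Rightarrow> real \<Rightarrow> real \<Rightarrow> real" where
  "budget_score a c x = a^2 * x / (x + 1) - 1 / (c - x)"

definition opt_bid :: "real \<Rightarrow> real \<Rightarrow> real" where
  "opt_bid a c = max 0 ((a * c - 1) / (a + 1))"

lemma score_eq_budget_score: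
  assumes "g \<ge> 0"
  shows "score g m (1 / (c - m)) = budget_score (sqrt g) c m"
  using assms unfolding score_def budget_score_def by simp

lemma budget_score_gap:
  assumes "a > 0" "M > -1" "x > -1" "x < c" and opt: "a * c = a * M + M + 1"
  shows "budget_score a c M - budget_score a c x
    = a * (a + 1) * (M - x)^2 / ((M + 1) * (x + 1) * (c - x))"
proof -
  have cM: "c - M = (M + 1) / a" using assms(1) opt by (simp add: field_simps)
  have "c - x \<noteq> 0" "M + 1 \<noteq> 0" "x + 1 \<noteq> 0" "a \<noteq> 0" using assms by auto
  then have "budget_score a c M - budget_score a c x =
      ((a^2 * M - a) * ((x + 1) * (c - x)) - (a^2 * x * (c - x) - (x + 1)) * (M + 1))
      / ((M + 1) * (x + 1) * (c - x))"
    unfolding budget_score_def cM by (simp add: divide_simps)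
  also have "(a^2 * M - a) * ((x + 1) * (c - x)) - (a^2 * x * (c - x) - (x + 1)) * (M + 1)
      = a * (a + 1) * (M - x)^2"
    using opt by algebra
  finally show ?thesis .
qed

lemma budget_score_gap_zero:
  assumes "x > 0" "x < c"
  shows "budget_score a c 0 - budget_score a c x
    = x * (x + 1 - a^2 * c * (c - x)) / ((x + 1) * c * (c - x))"
proof -
  have "c - x \<noteq> 0" "c \<noteq> 0" "x + 1 \<noteq> 0" using assms by auto
  then have "budget_score a c 0 - budget_score a c x =
      ((a^2 * x * (c - x) - (x + 1)) * (-c) + (x + 1) * (c - x) * (-1)) / ((x + 1) * c * (c - x))"
    unfolding budget_score_def by (simp add: divide_simps)
  also have "(a^2 * x * (c - x) - (x + 1)) * (-c) + (x + 1) * (c - x) * (-1)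
      = x * (x + 1 - a^2 * c * (c - x))"
    by algebra
  finally show ?thesis .
qed

lemma opt_bid_bounds:
  assumes "a > 0" "c > 0"
  shows "0 \<le> opt_bid a c" "opt_bid a c < c"
  using assms unfolding opt_bid_def by (auto simp: field_simps)

lemma budget_score_less_opt_bid:
  assumes a: "a > 0" and c: "c > 0" and x: "0 \<le> x" "x < c" "x \<noteq> opt_bid a c"
  shows "budget_score a c x < budget_score a c (opt_bid a c)"
proof (cases "a * c > 1")
  case True
  define M where "M = (a * c - 1) / (a + 1)"
  have M: "M > 0" "opt_bid a c = M" using True a unfolding M_def opt_bid_def by auto
  have "(a + 1) * M = a * c - 1" using a unfolding M_def by simp
  then have "a * c = a * M + M + 1" by algebra
  then have "budget_score a c M - budget_score a c x
      = a * (a + 1) * (M - x)^2 / ((M + 1) * (x + 1) * (c - x))"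
    using a M x by (intro budget_score_gap) auto
  also have "\<dots> > 0" using a M x by (intro divide_pos_pos mult_pos_pos) auto
  finally show ?thesis using M by simp
next
  case False
  then have "(a * c - 1) / (a + 1) \<le> 0" using a by (intro divide_nonpos_pos) auto
  then have opt: "opt_bid a c = 0" unfolding opt_bid_def by simp
  have "a^2 * c * (c - x) \<le> (a * c)^2" using a c x by (simp add: power2_eq_square)
  also have "\<dots> \<le> 1" using False a c by (simp add: power_le_one)
  finally have "x + 1 - a^2 * c * (c - x) > 0" using x opt by simp
  then have "budget_score a c 0 - budget_score a c x > 0"
    using x c opt by (simp add: budget_score_gap_zero)
  then show ?thesis using opt by simp
qed

lemma cheaper_action_of_budget_score_gt:
  assumes g: "g \<ge> 0" and x: "x < c" and s: "s < budget_score (sqrt g) c x"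
  shows "\<exists>t>0. score g x t = s \<and> cost x t < c"
proof (intro exI conjI)
  define t where "t = 1 / (c - x) + (budget_score (sqrt g) c x - s)"
  have "1 / (c - x) < t" using s unfolding t_def by simp
  moreover have "0 < 1 / (c - x)" using x by simp
  ultimately show "t > 0" by linarith
  then have "1 / t < c - x" using \<open>1 / (c - x) < t\<close> x by (simp add: field_simps)
  then show "cost x t < c" unfolding cost_def by simp
  show "score g x t = s" using g unfolding t_def score_def budget_score_def by simp
qed

lemma equilibrium_bid:
  assumes g: "g > 0" and eq: "sym_equilibrium g \<sigma>" and v: "v \<in> {0<..1}"
  shows "fst (\<sigma> v) = opt_bid (sqrt g) (v^2 / 2)"
proof (rule ccontr)
  define m where "m = fst (\<sigma> v)"
  define t where "t = snd (\<sigma> v)"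
  define c where "c = v^2 / 2"
  define b where "b = opt_bid (sqrt g) c"
  assume "fst (\<sigma> v) \<noteq> opt_bid (sqrt g) (v^2 / 2)"
  then have m_ne: "m \<noteq> b" unfolding m_def b_def c_def .
  have a: "sqrt g > 0" and c: "c > 0" using g v unfolding c_def by auto
  have b: "0 \<le> b" "b < c" unfolding b_def using opt_bid_bounds[OF a c] .
  have m: "m \<ge> 0" and t: "t > 0" using eq v unfolding sym_equilibrium_def m_def t_def by auto
  have cost_mt: "m + 1 / t = c" using equilibrium_cost[OF eq v] unfolding cost_def m_def t_def c_def .
  then have mc: "m < c" using t by (smt (verit) divide_pos_pos)
  have "c - m = 1 / t" using cost_mt by simp
  then have "t = 1 / (c - m)" by simp
  then have "score g m t = budget_score (sqrt g) c m" using g by (simp add: score_eq_budget_score)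
  also have "\<dots> < budget_score (sqrt g) c b"
    using a c m mc m_ne unfolding b_def by (rule budget_score_less_opt_bid)
  finally obtain t' where t': "t' > 0" "score g b t' = score g m t" "cost b t' < c"
    using cheaper_action_of_budget_score_gt[OF less_imp_le[OF g] b(2)] by blast
  have "cost m t \<le> cost b t'"
    using eq v t' b unfolding sym_equilibrium_def m_def t_def by fastforce
  with t' cost_mt show False unfolding cost_def by simp
qed

lemma opt_bid_half_square:
  assumes "a * u^2 = 2"
  shows "opt_bid a (v^2 / 2) = max 0 ((v^2 - u^2) / (2 + u^2))"
proof -
  have "a > 0" using assms mult_nonpos_nonneg[of a "u^2"] by fastforce
  then have "u^2 \<noteq> 0" "a + 1 \<noteq> 0" "2 + u^2 \<noteq> 0"
    using assms by (auto simp: add_nonneg_eq_0_iff)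
  then have "(a * (v^2 / 2) - 1) / (a + 1) = (v^2 - u^2) / (2 + u^2)"
    using assms by (simp add: divide_simps) algebra
  then show ?thesis unfolding opt_bid_def by simp
qed

definition mean_bid :: "real \<Rightarrow> real" where
  "mean_bid u = (1 - 3 * u^2 + 2 * u^3) / (6 + 3 * u^2)"

lemma mean_bid_strict_antimono:
  assumes "0 \<le> y" "y < x" "x \<le> 1"
  shows "mean_bid x < mean_bid y"
proof -
  have "(1 - 3 * y^2 + 2 * y^3) * (6 + 3 * x^2) - (1 - 3 * x^2 + 2 * x^3) * (6 + 3 * y^2)
      = (x - y) * (21 * (x + y) - 12 * (x^2 + x * y + y^2) - 6 * (x^2 * y^2))"
    by (simp add: algebra_simps power2_eq_square power3_eq_cube)
  moreover have "x^2 \<le> x" "y^2 \<le> y" "x * y \<le> y"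
    using assms mult_left_mono[of x 1 x] mult_left_mono[of y 1 y] mult_right_mono[of x 1 y]
    by (auto simp: power2_eq_square)
  moreover have "x^2 * y^2 \<le> x * y"
  proof -
    have "x * y \<le> 1" using \<open>x * y \<le> y\<close> assms by linarith
    then have "(x * y) * (x * y) \<le> 1 * (x * y)" using assms by (intro mult_right_mono) auto
    then show ?thesis by (simp add: power2_eq_square mult_ac)
  qed
  ultimately have "(1 - 3 * x^2 + 2 * x^3) * (6 + 3 * y^2) < (1 - 3 * y^2 + 2 * y^3) * (6 + 3 * x^2)"
    using assms by (smt (verit) mult_pos_pos)
  then show ?thesis unfolding mean_bid_def by (simp add: divide_simps add_pos_nonneg)
qed

lemma has_integral_threshold_bid:
  assumes u: "0 \<le> u" "u \<le> 1"
  shows "((\<lambda>v. max 0 ((v^2 - u^2) / (2 + u^2))) has_integral mean_bid u) {0..1}"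
proof -
  let ?f = "\<lambda>v. max 0 ((v^2 - u^2) / (2 + u^2))"
  define F where "F v = (v^3 / 3 - u^2 * v) / (2 + u^2)" for v
  have pos: "2 + u^2 > 0" by (simp add: add_pos_nonneg)
  have "(?f has_integral 0) {0..u}"
  proof (rule has_integral_is_0)
    fix v assume "v \<in> {0..u}"
    then have "v^2 \<le> u^2" by (intro power_mono) auto
    with pos show "?f v = 0" by (simp add: divide_nonpos_pos)
  qed
  moreover have "(?f has_integral F 1 - F u) {u..1}"
  proof -
    have ftc: "((\<lambda>v. (v^2 - u^2) / (2 + u^2)) has_integral F 1 - F u) {u..1}"
    proof (rule fundamental_theorem_of_calculus)
      fix v :: real
      have "((\<lambda>v. v^3 / 3 - u^2 * v) has_real_derivative v^2 - u^2) (at v within {u..1})"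
        by (auto intro!: derivative_eq_intros)
      then have "(F has_real_derivative (v^2 - u^2) / (2 + u^2)) (at v within {u..1})"
        unfolding F_def by (rule DERIV_cdivide)
      then show "(F has_vector_derivative (v^2 - u^2) / (2 + u^2)) (at v within {u..1})"
        by (simp add: has_real_derivative_iff_has_vector_derivative)
    qed (use u in simp)
    show ?thesis
    proof (rule has_integral_eq[OF _ ftc])
      fix v assume "v \<in> {u..1}"
      then have "u^2 \<le> v^2" using u by (intro power_mono) auto
      with pos show "(v^2 - u^2) / (2 + u^2) = ?f v" by simp
    qed
  qed
  ultimately have "(?f has_integral 0 + (F 1 - F u)) {0..1}"
    using u by (intro has_integral_combine) auto
  moreover have "F 1 - F u = mean_bid u"
  proof -
    have "(1^3 / 3 - u^2 * 1) - (u^3 / 3 - u^2 * u) = (1 - 3 * u^2 + 2 * u^3) / 3"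
      by (simp add: power2_eq_square power3_eq_cube field_simps)
    then have "F 1 - F u = (1 - 3 * u^2 + 2 * u^3) / 3 / (2 + u^2)"
      by (simp only: F_def diff_divide_distrib[symmetric])
    also have "\<dots> = mean_bid u"
      unfolding mean_bid_def divide_divide_eq_left by (simp add: distrib_left)
    finally show ?thesis .
  qed
  ultimately show ?thesis by simp
qed

definition bid_threshold :: "real \<Rightarrow> real" where
  "bid_threshold g = sqrt (2 / sqrt g)"

lemma sqrt_mult_bid_threshold_sq: "g > 0 \<Longrightarrow> sqrt g * bid_threshold g ^ 2 = 2"
  unfolding bid_threshold_def by simp

lemma bid_threshold_bounds:
  assumes "g \<ge> 4"
  shows "0 \<le> bid_threshold g" "bid_threshold g \<le> 1"
proof -
  have "sqrt g \<ge> 2" using real_sqrt_le_mono[OF assms] by (simp add: real_sqrt_four)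
  then have "2 / sqrt g \<le> 1" using assms by (auto simp: divide_le_eq)
  then show "0 \<le> bid_threshold g" "bid_threshold g \<le> 1"
    unfolding bid_threshold_def using assms by simp_all
qed

lemma bid_threshold_strict_antimono:
  assumes "0 < g1" "g1 < g2"
  shows "bid_threshold g2 < bid_threshold g1"
proof -
  have "2 / sqrt g2 < 2 / sqrt g1" using assms by (simp add: frac_less2)
  then show ?thesis unfolding bid_threshold_def by simp
qed

lemma exp_bid_equilibrium:
  assumes g: "g \<ge> 4" and eq: "sym_equilibrium g \<sigma>"
  shows "exp_bid \<sigma> = mean_bid (bid_threshold g)"
proof -
  let ?u = "bid_threshold g"
  have g0: "g > 0" using g by simp
  have "((\<lambda>v. fst (\<sigma> v)) has_integral mean_bid ?u) {0..1}"
  proof (rule has_integral_spike_finite[OF _ _ has_integral_threshold_bid[OF bid_threshold_bounds[OF g]]])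
    fix v :: real assume "v \<in> {0..1} - {0}"
    then have "v \<in> {0<..1}" by auto
    then have "fst (\<sigma> v) = opt_bid (sqrt g) (v^2 / 2)" by (rule equilibrium_bid[OF g0 eq])
    then show "fst (\<sigma> v) = max 0 ((v^2 - ?u^2) / (2 + ?u^2))"
      using opt_bid_half_square[OF sqrt_mult_bid_threshold_sq[OF g0]] by simp
  qed simp
  then show ?thesis unfolding exp_bid_def by (rule integral_unique)
qed

theorem proposition6:
  fixes \<sigma> :: "real \<Rightarrow> real \<Rightarrow> real \<times> real"
  assumes "\<forall>g>0. sym_equilibrium g (\<sigma> g)"
  shows "((\<lambda>g. exp_bid (\<sigma> g)) \<longlongrightarrow> 1/6) at_top
    \<and> (\<exists>G. \<forall>g1 g2. G \<le> g1 \<longrightarrow> g1 < g2 \<longrightarrow> exp_bid (\<sigma> g1) < exp_bid (\<sigma> g2))"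
proof
  have closed_form: "exp_bid (\<sigma> g) = mean_bid (bid_threshold g)" if "g \<ge> 4" for g
    using exp_bid_equilibrium[OF that] assms that by simp
  have "((\<lambda>g. mean_bid (bid_threshold g)) \<longlongrightarrow> 1/6) at_top"
    unfolding mean_bid_def bid_threshold_def by real_asymp
  moreover have "eventually (\<lambda>g. mean_bid (bid_threshold g) = exp_bid (\<sigma> g)) at_top"
    using eventually_ge_at_top[of 4] by eventually_elim (simp add: closed_form)
  ultimately show "((\<lambda>g. exp_bid (\<sigma> g)) \<longlongrightarrow> 1/6) at_top"
    by (rule Lim_transform_eventually)
  show "\<exists>G. \<forall>g1 g2. G \<le> g1 \<longrightarrow> g1 < g2 \<longrightarrow> exp_bid (\<sigma> g1) < exp_bid (\<sigma> g2)"
  proof (intro exI allI impI)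
    fix g1 g2 :: real assume g: "4 \<le> g1" "g1 < g2"
    then have "mean_bid (bid_threshold g1) < mean_bid (bid_threshold g2)"
      by (intro mean_bid_strict_antimono bid_threshold_strict_antimono bid_threshold_bounds) auto
    with g show "exp_bid (\<sigma> g1) < exp_bid (\<sigma> g2)" by (simp add: closed_form)
  qed
qed

end
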